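(* Let $s>1$, $\eta(s)=\sum_{k=1}^\infty\frac{1}{(k+1)\ln^s(k+1)}$, let $a_k=\frac{1}{\eta(s)}\cdot\frac{1}{(k+1)\ln^s(k+1)}$ ($k\in\mathbb{N}$), and let $K$ be the associated generalized Cantor set. Then there exist constants $c_1,c_2,b,t_0>0$ with $\ln\ln(b/t)>0$ for $0<t\le t_0$, such that $$c_1(\ln\ln(b/t))^{1-s}\le |K(t)|\le c_2(\ln\ln(b/t))^{1-s}\quad\text{for all } t\in(0,t_0].$$
   Context: Generalized Cantor set for positive $(a_k)$ with $\sum a_k=1$: $K_0=[0,1]$; recursively $K_n$ is obtained from $K_{n-1}$ (a union of $2^{n-1}$ disjoint closed intervals) by removing from each of its intervals the open centered subinterval of length $a_n2^{-(n-1)}$; $K=\bigcap_n K_n$. For $t>0$, $K(t)=\{x\in\mathbb{R}:\operatorname{dist}(x,K)<t\}$ and $|\cdot|$ is Lebesgue measure. *)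

theory Defs
  imports "HOL-Analysis.Analysis"
begin

text \<open>Generalized Cantor set for a sequence a (indexed from 1; a 0 is unused).
  cantor_ivls a n is the set of (left,right) endpoints of the 2^n closed intervals of K_n.
  At step n = Suc m, the open centered subinterval of length a n * 2^(-(n-1)),
  i.e. half-length a n / 2^n, is removed from each interval.\<close>

fun cantor_ivls :: "(nat \<Rightarrow> real) \<Rightarrow> nat \<Rightarrow> (real \<times> real) set" where
  "cantor_ivls a 0 = {(0, 1)}"
| "cantor_ivls a (Suc n) =
     (\<Union>p\<in>cantor_ivls a n.
        {(fst p, (fst p + snd p) / 2 - a (Suc n) / 2 ^ Suc n),
         ((fst p + snd p) / 2 + a (Suc n) / 2 ^ Suc n, snd p)})"

definition cantor_stage :: "(nat \<Rightarrow> real) \<Rightarrow> nat \<Rightarrow> real set" where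
  "cantor_stage a n = (\<Union>p\<in>cantor_ivls a n. {fst p .. snd p})"

definition cantor_set :: "(nat \<Rightarrow> real) \<Rightarrow> real set" where
  "cantor_set a = (\<Inter>n. cantor_stage a n)"

definition cantor_nbhd :: "(nat \<Rightarrow> real) \<Rightarrow> real \<Rightarrow> real set" where
  "cantor_nbhd a t = {x. infdist x (cantor_set a) < t}"

end

theory Submission
  imports Defs
begin

text \<open>The stage K_n consists of 2^n intervals of common length R_n / 2^n, where
  R_n = 1 - (a_1 + ... + a_n) = |K_n|. All their endpoints lie in K, so K_n is contained in K(t)
  as soon as R_n / 2^n < 2t; conversely K(t) is covered by the intervals of any K_m enlarged by t on
  both sides, whence |K(t)| \<le> R_m + 2^(m+1) t. With n = m + 1 the least index such that
  R_n / 2^n < 2t this gives R_n \<le> |K(t)| \<le> 2 R_m. For a_k proportional to 1/(k ln^s k),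
  comparing the tail sums with the primitive of 1/(x ln^s x) shows that R_m is of order
  (ln m)^(1-s), and the choice of n forces sqrt(ln(1/t)) < n \<le> ln(1/t)^2 - 2, so that ln n is
  of order ln ln(1/t).\<close>

lemma tail_sum_bounds_by_primitive:
  fixes f F :: "real \<Rightarrow> real" and c0 c :: real
  assumes deriv: "\<And>x. c0 < x \<Longrightarrow> (F has_real_derivative - f x) (at x)"
    and antimono: "\<And>x y. c0 < x \<Longrightarrow> x \<le> y \<Longrightarrow> f y \<le> f x"
    and nonneg: "\<And>x. c0 < x \<Longrightarrow> 0 \<le> f x"
    and lim: "(F \<longlongrightarrow> 0) at_top"
    and c: "c0 < c"
  shows "summable (\<lambda>n. f (real n + c))"
    and "F c \<le> (\<Sum>n. f (real n + c))"
    and "c0 < c - 1 \<Longrightarrow> (\<Sum>n. f (real n + c)) \<le> F (c - 1)"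
proof -
  have step: "f (x + 1) \<le> F x - F (x + 1) \<and> F x - F (x + 1) \<le> f x" if x: "c0 < x" for x
  proof -
    obtain z where z: "x < z" "z < x + 1" "F (x + 1) - F x = (x + 1 - x) * - f z"
      using MVT2[of x "x + 1" F "\<lambda>y. - f y"] deriv x by auto
    then show ?thesis using antimono[of x z] antimono[of z "x + 1"] x by auto
  qed
  have telescope: "(\<lambda>n. F (real n + d) - F (real n + d + 1)) sums F d" for d
  proof -
    have "filterlim (\<lambda>n. real n + d) at_top sequentially"
      using filterlim_tendsto_add_at_top[OF tendsto_const filterlim_real_sequentially]
      by (simp add: add.commute)
    then have "(\<lambda>n. F (real n + d)) \<longlonglongrightarrow> 0"
      using filterlim_compose[OF lim] by blast
    from telescope_sums'[OF this] show ?thesis by (simp add: add_ac)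
  qed
  show sum: "summable (\<lambda>n. f (real n + c))"
  proof (rule summable_comparison_test'[where N = 1])
    show "summable (\<lambda>n. F (real n + (c - 1)) - F (real n + (c - 1) + 1))"
      using telescope sums_summable by blast
    show "norm (f (real n + c)) \<le> F (real n + (c - 1)) - F (real n + (c - 1) + 1)" if "1 \<le> n" for n
      using step[of "real n + (c - 1)"] nonneg[of "real n + c"] that c by simp
  qed
  have "F c = (\<Sum>n. F (real n + c) - F (real n + c + 1))"
    using telescope by (simp add: sums_iff)
  also have "\<dots> \<le> (\<Sum>n. f (real n + c))"
    using step c sum telescope by (intro suminf_le) (auto simp: sums_iff)
  finally show "F c \<le> (\<Sum>n. f (real n + c))" .
  assume c1: "c0 < c - 1"
  have "(\<Sum>n. f (real n + c)) \<le> (\<Sum>n. F (real n + (c - 1)) - F (real n + (c - 1) + 1))"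
    using step[of "real _ + (c - 1)"] c1 sum telescope[of "c - 1"]
    by (intro suminf_le) (auto simp: sums_iff)
  also have "\<dots> = F (c - 1)"
    using telescope[of "c - 1"] by (simp add: sums_iff)
  finally show "(\<Sum>n. f (real n + c)) \<le> F (c - 1)" .
qed

lemma log_power_primitive_deriv:
  fixes s x :: real
  assumes "s \<noteq> 1" "1 < x"
  shows "((\<lambda>y. ln y powr (1 - s) / (s - 1)) has_real_derivative - (1 / (x * ln x powr s))) (at x)"
proof -
  have "((\<lambda>y. ln y powr (1 - s) / (s - 1)) has_real_derivative
          (1 - s) * ln x powr (1 - s - 1) * (1 / x) / (s - 1)) (at x)"
    using assms by (auto intro!: derivative_eq_intros)
  also have "(1 - s) * ln x powr (1 - s - 1) * (1 / x) / (s - 1) = - (1 / (x * ln x powr s))"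
    using assms by (simp add: powr_diff powr_minus field_simps)
  finally show ?thesis .
qed

lemma log_power_primitive_tendsto:
  fixes s :: real
  assumes "1 < s"
  shows "((\<lambda>y. ln y powr (1 - s) / (s - 1)) \<longlongrightarrow> 0) at_top"
  using assms by (intro tendsto_divide_zero tendsto_neg_powr filterlim_compose[OF ln_at_top filterlim_ident]) auto

lemma log_power_density_antimono:
  fixes s x y :: real
  assumes "0 < s" "1 < x" "x \<le> y"
  shows "1 / (y * ln y powr s) \<le> 1 / (x * ln x powr s)"
  using assms by (intro divide_left_mono mult_mono powr_mono2) auto

definition cantor_rest :: "(nat \<Rightarrow> real) \<Rightarrow> nat \<Rightarrow> real" where
  "cantor_rest a n = 1 - (\<Sum>k\<in>{1..n}. a k)"

definition cantor_ivl_len :: "(nat \<Rightarrow> real) \<Rightarrow> nat \<Rightarrow> real" where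
  "cantor_ivl_len a n = cantor_rest a n / 2 ^ n"

lemma cantor_rest_Suc: "cantor_rest a (Suc n) = cantor_rest a n - a (Suc n)"
  by (simp add: cantor_rest_def)

lemma cantor_rest_le_one: "(\<And>k. 0 \<le> a k) \<Longrightarrow> cantor_rest a n \<le> 1"
  by (simp add: cantor_rest_def sum_nonneg)

lemma cantor_ivls_length: "p \<in> cantor_ivls a n \<Longrightarrow> snd p - fst p = cantor_ivl_len a n"
proof (induction n arbitrary: p)
  case 0
  then show ?case by (simp add: cantor_ivl_len_def cantor_rest_def)
next
  case (Suc n)
  then obtain q where q: "q \<in> cantor_ivls a n" and
    p: "p = (fst q, (fst q + snd q) / 2 - a (Suc n) / 2 ^ Suc n) \<or>
        p = ((fst q + snd q) / 2 + a (Suc n) / 2 ^ Suc n, snd q)" by auto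
  have "snd q = fst q + cantor_rest a n / 2 ^ n"
    using Suc.IH[OF q] by (simp add: cantor_ivl_len_def)
  with p show ?case by (auto simp: cantor_ivl_len_def cantor_rest_Suc field_simps)
qed

lemma finite_cantor_ivls: "finite (cantor_ivls a n)"
  by (induction n) auto

lemma card_cantor_ivls_le: "real (card (cantor_ivls a n)) \<le> 2 ^ n"
proof (induction n)
  case 0
  then show ?case by simp
next
  case (Suc n)
  have "card (cantor_ivls a (Suc n)) \<le> (\<Sum>p\<in>cantor_ivls a n.
          card {(fst p, (fst p + snd p) / 2 - a (Suc n) / 2 ^ Suc n),
                ((fst p + snd p) / 2 + a (Suc n) / 2 ^ Suc n, snd p)})"
    by (simp only: cantor_ivls.simps) (rule card_UN_le[OF finite_cantor_ivls])
  also have "\<dots> \<le> (\<Sum>p\<in>cantor_ivls a n. 2)"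
    by (intro sum_mono) (simp add: card_insert_if)
  also have "\<dots> = 2 * card (cantor_ivls a n)"
    by simp
  finally have "real (card (cantor_ivls a (Suc n))) \<le> 2 * real (card (cantor_ivls a n))"
    by linarith
  then show ?case
    using Suc.IH by (simp only: power_Suc)
qed

definition cantor_gaps :: "(nat \<Rightarrow> real) \<Rightarrow> nat \<Rightarrow> real set" where
  "cantor_gaps a n = (\<Union>p\<in>cantor_ivls a n.
     {(fst p + snd p) / 2 - a (Suc n) / 2 ^ Suc n <..< (fst p + snd p) / 2 + a (Suc n) / 2 ^ Suc n})"

lemma cantor_stage_subset_Suc_Un_gaps: "cantor_stage a n \<subseteq> cantor_stage a (Suc n) \<union> cantor_gaps a n"
proof
  fix x assume "x \<in> cantor_stage a n"
  then obtain p where p: "p \<in> cantor_ivls a n" "x \<in> {fst p .. snd p}"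
    unfolding cantor_stage_def by blast
  define m where "m = (fst p + snd p) / 2"
  define d where "d = a (Suc n) / 2 ^ Suc n"
  have left: "(fst p, m - d) \<in> cantor_ivls a (Suc n)" and right: "(m + d, snd p) \<in> cantor_ivls a (Suc n)"
    using p(1) unfolding m_def d_def by auto
  consider "x \<le> m - d" | "m + d \<le> x" | "x \<in> {m - d <..< m + d}"
    by fastforce
  then show "x \<in> cantor_stage a (Suc n) \<union> cantor_gaps a n"
  proof cases
    case 1
    then have "x \<in> {fst (fst p, m - d) .. snd (fst p, m - d)}" using p(2) by simp
    then show ?thesis using left unfolding cantor_stage_def by blast
  next
    case 2
    then have "x \<in> {fst (m + d, snd p) .. snd (m + d, snd p)}" using p(2) by simp
    then show ?thesis using right unfolding cantor_stage_def by blast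
  next
    case 3
    then show ?thesis using p(1) unfolding cantor_gaps_def m_def d_def by blast
  qed
qed

lemma unit_interval_subset_cantor_stage_gaps:
  "{0..1} \<subseteq> cantor_stage a n \<union> (\<Union>k<n. cantor_gaps a k)"
proof (induction n)
  case 0
  then show ?case by (simp add: cantor_stage_def)
next
  case (Suc n)
  then show ?case using cantor_stage_subset_Suc_Un_gaps[of a n] by (auto simp: lessThan_Suc)
qed

lemma cantor_stage_lmeasurable: "cantor_stage a n \<in> lmeasurable"
  unfolding cantor_stage_def by (intro lmeasurable_compact compact_UN finite_cantor_ivls) auto

lemma cantor_gaps_lmeasurable: "cantor_gaps a n \<in> lmeasurable"
  unfolding cantor_gaps_def by (intro fmeasurable.finite_UN finite_cantor_ivls) auto

context
  fixes a :: "nat \<Rightarrow> real"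
  assumes a_nonneg: "\<And>k. 0 \<le> a k"
begin

lemma measure_cantor_gaps_le: "measure lebesgue (cantor_gaps a n) \<le> a (Suc n)"
proof -
  have "measure lebesgue (cantor_gaps a n) \<le> (\<Sum>p\<in>cantor_ivls a n. measure lebesgue
          {(fst p + snd p) / 2 - a (Suc n) / 2 ^ Suc n <..< (fst p + snd p) / 2 + a (Suc n) / 2 ^ Suc n})"
    unfolding cantor_gaps_def by (rule measure_UNION_le[OF finite_cantor_ivls]) auto
  also have "\<dots> = card (cantor_ivls a n) * (a (Suc n) / 2 ^ n)"
    using a_nonneg[of "Suc n"] by simp
  also have "\<dots> \<le> 2 ^ n * (a (Suc n) / 2 ^ n)"
    using card_cantor_ivls_le a_nonneg by (intro mult_right_mono) auto
  finally show ?thesis by simp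
qed

lemma cantor_rest_le_measure_stage: "cantor_rest a n \<le> measure lebesgue (cantor_stage a n)"
proof -
  have "1 = measure lebesgue {0..1::real}"
    by simp
  also have "\<dots> \<le> measure lebesgue (cantor_stage a n \<union> (\<Union>k<n. cantor_gaps a k))"
    by (intro measure_mono_fmeasurable unit_interval_subset_cantor_stage_gaps)
      (auto intro: fmeasurable.Un fmeasurable.finite_UN cantor_stage_lmeasurable cantor_gaps_lmeasurable)
  also have "\<dots> \<le> measure lebesgue (cantor_stage a n) + (\<Sum>k<n. measure lebesgue (cantor_gaps a k))"
    by (intro order.trans[OF measure_Un_le] add_left_mono measure_UNION_le)
      (auto intro: fmeasurableD fmeasurable.finite_UN cantor_stage_lmeasurable cantor_gaps_lmeasurable)
  also have "\<dots> \<le> measure lebesgue (cantor_stage a n) + (\<Sum>k<n. a (Suc k))"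
    by (intro add_left_mono sum_mono measure_cantor_gaps_le)
  also have "(\<Sum>k<n. a (Suc k)) = (\<Sum>k\<in>{1..n}. a k)"
    by (induction n) auto
  finally show ?thesis unfolding cantor_rest_def by simp
qed

context
  assumes rest_nonneg: "\<And>n. 0 \<le> cantor_rest a n"
begin

lemma cantor_ivl_len_nonneg: "0 \<le> cantor_ivl_len a n"
  using rest_nonneg[of n] by (simp add: cantor_ivl_len_def)

lemma cantor_ivls_fst_le_snd: "p \<in> cantor_ivls a n \<Longrightarrow> fst p \<le> snd p"
  using cantor_ivls_length[of p a n] cantor_ivl_len_nonneg[of n] by simp

lemma cantor_ivls_endpoints_persist:
  assumes "p \<in> cantor_ivls a n"
  shows "(\<exists>q\<in>cantor_ivls a (n + j). fst q = fst p) \<and> (\<exists>q\<in>cantor_ivls a (n + j). snd q = snd p)"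
proof (induction j)
  case 0
  then show ?case using assms by auto
next
  case (Suc j)
  then obtain q1 q2 where q1: "q1 \<in> cantor_ivls a (n + j)" "fst q1 = fst p"
    and q2: "q2 \<in> cantor_ivls a (n + j)" "snd q2 = snd p" by blast
  have "(fst q1, (fst q1 + snd q1) / 2 - a (Suc (n + j)) / 2 ^ Suc (n + j)) \<in> cantor_ivls a (n + Suc j)"
    by (simp only: add_Suc_right cantor_ivls.simps) (rule UN_I[OF q1(1)], simp)
  moreover have "((fst q2 + snd q2) / 2 + a (Suc (n + j)) / 2 ^ Suc (n + j), snd q2) \<in> cantor_ivls a (n + Suc j)"
    by (simp only: add_Suc_right cantor_ivls.simps) (rule UN_I[OF q2(1)], simp)
  ultimately show ?case using q1(2) q2(2) by (metis fst_conv snd_conv)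
qed

lemma cantor_ivls_nested:
  "p \<in> cantor_ivls a (m + j) \<Longrightarrow> \<exists>q\<in>cantor_ivls a m. fst q \<le> fst p \<and> snd p \<le> snd q"
proof (induction j arbitrary: p)
  case 0
  then show ?case by auto
next
  case (Suc j)
  then obtain q where q: "q \<in> cantor_ivls a (m + j)" and
    p: "p = (fst q, (fst q + snd q) / 2 - a (Suc (m + j)) / 2 ^ Suc (m + j)) \<or>
        p = ((fst q + snd q) / 2 + a (Suc (m + j)) / 2 ^ Suc (m + j), snd q)" by auto
  define d where "d = a (Suc (m + j)) / 2 ^ Suc (m + j)"
  have "fst q \<le> snd q" "0 \<le> d"
    using cantor_ivls_fst_le_snd[OF q] a_nonneg by (auto simp: d_def)
  with p[folded d_def] have "fst q \<le> fst p \<and> snd p \<le> snd q"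
    by (auto simp: field_simps)
  moreover obtain q' where "q' \<in> cantor_ivls a m" "fst q' \<le> fst q" "snd q \<le> snd q'"
    using Suc.IH[OF q] by blast
  ultimately show ?case by (intro bexI[of _ q']) auto
qed

lemma cantor_ivls_endpoints_in_set:
  assumes p: "p \<in> cantor_ivls a n"
  shows "fst p \<in> cantor_set a" "snd p \<in> cantor_set a"
proof -
  have "fst p \<in> cantor_stage a m \<and> snd p \<in> cantor_stage a m" for m
  proof (cases "n \<le> m")
    case True
    then obtain j where "m = n + j" using le_Suc_ex by blast
    then obtain q1 q2 where "q1 \<in> cantor_ivls a m" "fst q1 = fst p" "q2 \<in> cantor_ivls a m" "snd q2 = snd p"
      using cantor_ivls_endpoints_persist[OF p] by blast
    moreover have "fst q1 \<le> snd q1" "fst q2 \<le> snd q2"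
      using cantor_ivls_fst_le_snd calculation by blast+
    ultimately have "fst p \<in> {fst q1..snd q1}" "snd p \<in> {fst q2..snd q2}"
      by auto
    then show ?thesis
      unfolding cantor_stage_def using \<open>q1 \<in> _\<close> \<open>q2 \<in> _\<close> by blast
  next
    case False
    then obtain j where "n = m + j" using le_Suc_ex[of m n] by auto
    then obtain q where "q \<in> cantor_ivls a m" "fst q \<le> fst p" "snd p \<le> snd q"
      using cantor_ivls_nested p by blast
    moreover have "fst p \<le> snd p" using cantor_ivls_fst_le_snd p by blast
    ultimately have "fst p \<in> {fst q..snd q}" "snd p \<in> {fst q..snd q}"
      by auto
    then show ?thesis
      unfolding cantor_stage_def using \<open>q \<in> _\<close> by blast
  qed
  then show "fst p \<in> cantor_set a" "snd p \<in> cantor_set a"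
    unfolding cantor_set_def by auto
qed

lemma cantor_set_nonempty: "cantor_set a \<noteq> {}"
  using cantor_ivls_endpoints_in_set(1)[of "(0, 1)" 0] by auto

lemma cantor_nbhd_subset_thickened_stage:
  "cantor_nbhd a t \<subseteq> (\<Union>p\<in>cantor_ivls a m. {fst p - t .. snd p + t})"
proof
  fix x assume "x \<in> cantor_nbhd a t"
  then obtain y where y: "y \<in> cantor_set a" "dist x y < t"
    using cantor_set_nonempty
    by (auto simp: cantor_nbhd_def infdist_notempty cINF_less_iff)
  then have "y \<in> cantor_stage a m" unfolding cantor_set_def by blast
  then obtain p where "p \<in> cantor_ivls a m" "y \<in> {fst p .. snd p}"
    unfolding cantor_stage_def by blast
  then show "x \<in> (\<Union>p\<in>cantor_ivls a m. {fst p - t .. snd p + t})"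
    using y(2) by (intro UN_I[of p]) (auto simp: dist_real_def)
qed

lemma cantor_nbhd_lmeasurable: "cantor_nbhd a t \<in> lmeasurable"
proof (rule fmeasurableI2)
  show "(\<Union>p\<in>cantor_ivls a 0. {fst p - t .. snd p + t}) \<in> lmeasurable"
    by (intro lmeasurable_compact compact_UN finite_cantor_ivls) auto
  have "open (cantor_nbhd a t)"
    unfolding cantor_nbhd_def by (intro open_Collect_less continuous_intros)
  then show "cantor_nbhd a t \<in> sets lebesgue"
    by simp
qed (rule cantor_nbhd_subset_thickened_stage)

lemma measure_cantor_nbhd_le:
  assumes "0 < t"
  shows "measure lebesgue (cantor_nbhd a t) \<le> cantor_rest a m + 2 ^ Suc m * t"
proof -
  have "measure lebesgue (cantor_nbhd a t)
          \<le> measure lebesgue (\<Union>p\<in>cantor_ivls a m. {fst p - t .. snd p + t})"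
    by (intro measure_mono_fmeasurable cantor_nbhd_subset_thickened_stage
        fmeasurableD[OF cantor_nbhd_lmeasurable] lmeasurable_compact compact_UN finite_cantor_ivls) auto
  also have "\<dots> \<le> (\<Sum>p\<in>cantor_ivls a m. measure lebesgue {fst p - t .. snd p + t})"
    by (rule measure_UNION_le[OF finite_cantor_ivls]) auto
  also have "\<dots> = card (cantor_ivls a m) * (cantor_ivl_len a m + 2 * t)"
    using cantor_ivls_length cantor_ivls_fst_le_snd assms by (simp add: algebra_simps)
  also have "\<dots> \<le> 2 ^ m * (cantor_ivl_len a m + 2 * t)"
    using card_cantor_ivls_le cantor_ivl_len_nonneg assms by (intro mult_right_mono) auto
  also have "\<dots> = cantor_rest a m + 2 ^ Suc m * t"
    by (simp add: cantor_ivl_len_def field_simps)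
  finally show ?thesis .
qed

lemma cantor_rest_le_measure_nbhd:
  assumes "cantor_ivl_len a n < 2 * t"
  shows "cantor_rest a n \<le> measure lebesgue (cantor_nbhd a t)"
proof -
  have "cantor_stage a n \<subseteq> cantor_nbhd a t"
  proof
    fix x assume "x \<in> cantor_stage a n"
    then obtain p where p: "p \<in> cantor_ivls a n" "x \<in> {fst p .. snd p}"
      unfolding cantor_stage_def by blast
    have "x - fst p \<le> cantor_ivl_len a n / 2 \<or> snd p - x \<le> cantor_ivl_len a n / 2"
      using cantor_ivls_length[OF p(1)] by linarith
    then have "infdist x (cantor_set a) \<le> cantor_ivl_len a n / 2"
    proof
      assume "x - fst p \<le> cantor_ivl_len a n / 2"
      then show ?thesis
        using p(2) by (intro infdist_le2[OF cantor_ivls_endpoints_in_set(1)[OF p(1)]]) (auto simp: dist_real_def)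
    next
      assume "snd p - x \<le> cantor_ivl_len a n / 2"
      then show ?thesis
        using p(2) by (intro infdist_le2[OF cantor_ivls_endpoints_in_set(2)[OF p(1)]]) (auto simp: dist_real_def)
    qed
    then show "x \<in> cantor_nbhd a t"
      using assms unfolding cantor_nbhd_def by simp
  qed
  then have "measure lebesgue (cantor_stage a n) \<le> measure lebesgue (cantor_nbhd a t)"
    by (intro measure_mono_fmeasurable fmeasurableD cantor_stage_lmeasurable cantor_nbhd_lmeasurable)
  then show ?thesis
    using cantor_rest_le_measure_stage[of n] by linarith
qed

lemma cantor_nbhd_measure_bracket:
  assumes "0 < t" "t \<le> 1 / 2"
  obtains m where "2 ^ Suc m * t \<le> cantor_rest a m"
    and "cantor_rest a (Suc m) < 2 ^ Suc (Suc m) * t"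
    and "cantor_rest a (Suc m) \<le> measure lebesgue (cantor_nbhd a t)"
    and "measure lebesgue (cantor_nbhd a t) \<le> 2 * cantor_rest a m"
proof -
  obtain k where "(1 / 2) ^ k < 2 * t"
    using real_arch_pow_inv[of "2 * t" "1 / 2"] assms by auto
  moreover have "cantor_ivl_len a k \<le> (1 / 2) ^ k"
    using cantor_rest_le_one[of a k] a_nonneg by (simp add: cantor_ivl_len_def power_divide divide_right_mono)
  ultimately have ex: "cantor_ivl_len a k < 2 * t"
    by linarith
  define n where "n = (LEAST n. cantor_ivl_len a n < 2 * t)"
  have n: "cantor_ivl_len a n < 2 * t"
    unfolding n_def by (rule LeastI[of "\<lambda>n. cantor_ivl_len a n < 2 * t", OF ex])
  have "n \<noteq> 0"
  proof
    assume "n = 0"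
    then have "1 < 2 * t"
      using n by (simp add: cantor_ivl_len_def cantor_rest_def)
    with assms(2) show False by simp
  qed
  then obtain m where m: "n = Suc m"
    using not0_implies_Suc by blast
  have "\<not> cantor_ivl_len a m < 2 * t"
    using not_less_Least[of m "\<lambda>n. cantor_ivl_len a n < 2 * t"] m unfolding n_def by simp
  then have upper_rest: "2 ^ Suc m * t \<le> cantor_rest a m"
    by (simp add: cantor_ivl_len_def field_simps)
  show thesis
  proof
    show "2 ^ Suc m * t \<le> cantor_rest a m" by (fact upper_rest)
    show "cantor_rest a (Suc m) < 2 ^ Suc (Suc m) * t"
      using n m by (simp add: cantor_ivl_len_def field_simps)
    show "cantor_rest a (Suc m) \<le> measure lebesgue (cantor_nbhd a t)"
      using cantor_rest_le_measure_nbhd n m by simp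
    show "measure lebesgue (cantor_nbhd a t) \<le> 2 * cantor_rest a m"
      using measure_cantor_nbhd_le[OF assms(1), of m] upper_rest by simp
  qed
qed

end

end

lemma cantor_rest_eq_tail:
  assumes "summable h" "suminf h \<noteq> 0" "\<And>k. a (Suc k) = h k / suminf h"
  shows "cantor_rest a m = (\<Sum>n. h (n + m)) / suminf h"
proof -
  have "(\<Sum>k\<in>{1..m}. a k) = (\<Sum>k<m. a (Suc k))"
    by (induction m) auto
  also have "\<dots> = (\<Sum>k<m. h k) / suminf h"
    by (simp add: assms(3) sum_divide_distrib)
  finally show ?thesis
    using suminf_split_initial_segment[OF assms(1), of m] assms(2)
    by (simp add: cantor_rest_def field_simps)
qed

lemma cantor_rest_log_power_bounds:
  fixes s :: real
  assumes s: "s > 1"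
  defines "\<eta> \<equiv> (\<Sum>k. 1 / ((real (Suc k) + 1) * (ln (real (Suc k) + 1)) powr s))"
  defines "a \<equiv> (\<lambda>k::nat. (1 / \<eta>) * (1 / ((real k + 1) * (ln (real k + 1)) powr s)))"
  shows "0 < \<eta>" and "0 \<le> a k"
    and "ln (real m + 2) powr (1 - s) / ((s - 1) * \<eta>) \<le> cantor_rest a m"
    and "1 \<le> m \<Longrightarrow> cantor_rest a m \<le> ln (real m + 1) powr (1 - s) / ((s - 1) * \<eta>)"
proof -
  define f where "f x = 1 / (x * ln x powr s)" for x :: real
  define F where "F x = ln x powr (1 - s) / (s - 1)" for x :: real
  have tail: "summable (\<lambda>n. f (real n + c))" "F c \<le> (\<Sum>n. f (real n + c))"
    "2 < c \<Longrightarrow> (\<Sum>n. f (real n + c)) \<le> F (c - 1)" if "1 < c" for c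
    using tail_sum_bounds_by_primitive[of 1 F f c] that s log_power_primitive_deriv log_power_density_antimono
      log_power_primitive_tendsto unfolding f_def[abs_def] F_def[abs_def] by auto
  have h: "(\<lambda>k. 1 / ((real (Suc k) + 1) * (ln (real (Suc k) + 1)) powr s)) = (\<lambda>k. f (real k + 2))"
    by (simp add: f_def add_ac)
  have \<eta>_eq: "\<eta> = (\<Sum>n. f (real n + 2))"
    unfolding \<eta>_def h ..
  show \<eta>: "0 < \<eta>"
    unfolding \<eta>_eq using tail(1)[of 2] by (intro suminf_pos) (auto simp: f_def)
  then show "0 \<le> a k"
    by (simp add: a_def)
  have rest: "cantor_rest a m = (\<Sum>n. f (real n + (real m + 2))) / \<eta>"
    using cantor_rest_eq_tail[of "\<lambda>k. f (real k + 2)" a m] tail(1)[of 2] \<eta>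
    unfolding \<eta>_eq[symmetric] by (simp add: a_def f_def add_ac)
  show "ln (real m + 2) powr (1 - s) / ((s - 1) * \<eta>) \<le> cantor_rest a m"
    using tail(2)[of "real m + 2"] \<eta> unfolding rest F_def
    by (simp add: divide_right_mono flip: divide_divide_eq_left)
  show "cantor_rest a m \<le> ln (real m + 1) powr (1 - s) / ((s - 1) * \<eta>)" if "1 \<le> m"
    using tail(3)[of "real m + 2"] that \<eta> unfolding rest F_def
    by (simp add: divide_right_mono add_ac flip: divide_divide_eq_left)
qed

lemma ln_add_two_le_of_pow2_mult_le_one:
  fixes t :: real
  assumes t: "0 < t" "2 ^ n * t \<le> 1" and X: "3 \<le> ln (1 / t)"
  shows "ln (real n + 2) \<le> 2 * ln (ln (1 / t))"
proof -
  have "ln (2 ^ n * t) \<le> 0"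
    using t by simp
  then have "real n * ln 2 \<le> ln (1 / t)"
    using t by (simp add: ln_mult ln_realpow ln_div)
  moreover have "real n * (2 / 3) \<le> real n * ln 2"
    using ln2_ge_two_thirds by (intro mult_left_mono) auto
  moreover have "3 * ln (1 / t) \<le> ln (1 / t) ^ 2"
    using X by (simp add: power2_eq_square mult_right_mono)
  ultimately have "real n + 2 \<le> ln (1 / t) ^ 2"
    using X by linarith
  then have "ln (real n + 2) \<le> ln (ln (1 / t) ^ 2)"
    using X by (subst ln_le_cancel_iff) auto
  then show ?thesis
    using X by (simp add: ln_realpow)
qed

lemma sqrt_ln_inverse_less_of_ln_powr_less:
  fixes s D t :: real
  assumes s: "1 < s" and D: "0 < D" and t: "0 < t"
    and rest: "ln (real n + 2) powr (1 - s) < 2 ^ Suc n * t * D"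
    and X: "4 * s\<^sup>2 \<le> ln (1 / t)" "2 * (\<bar>ln D\<bar> + s) \<le> ln (1 / t)"
  shows "sqrt (ln (1 / t)) < real n"
proof -
  define X where "X = ln (1 / t)"
  have X_nonneg: "0 \<le> X"
    using X(1) zero_le_power2[of s] unfolding X_def by linarith
  have "(1 - s) * ln (ln (real n + 2)) < ln D + real (Suc n) * ln 2 - X"
    using ln_less_cancel_iff[THEN iffD2, OF _ _ rest] D t
    by (simp add: X_def ln_powr ln_mult ln_realpow ln_div algebra_simps)
  moreover have "(1 - s) * (real n + 1) \<le> (1 - s) * ln (ln (real n + 2))"
  proof (rule mult_left_mono_neg)
    have "ln (ln (real n + 2)) \<le> ln (real n + 2)"
      by (intro ln_bound) simp
    also have "\<dots> \<le> real n + 1"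
      using ln_le_minus_one[of "real n + 2"] by simp
    finally show "ln (ln (real n + 2)) \<le> real n + 1" .
  qed (use s in simp)
  moreover have "real (Suc n) * ln 2 \<le> real (Suc n)"
    using ln_le_minus_one[of 2] by (intro mult_left_le) auto
  ultimately have "X / 2 < real n * s"
    using X(2) by (simp add: X_def algebra_simps)
  moreover have "s * sqrt X \<le> X / 2"
  proof -
    have "2 * s \<le> sqrt X"
      using real_sqrt_le_mono[OF X(1)] s by (simp add: X_def real_sqrt_mult)
    then have "s * sqrt X \<le> sqrt X / 2 * sqrt X"
      using X_nonneg by (intro mult_right_mono) auto
    then show ?thesis
      using X_nonneg by simp
  qed
  ultimately have "s * sqrt X < s * real n"
    by (simp add: mult.commute)
  then show ?thesis
    using s by (simp add: X_def)
qed

lemma measure_cantor_nbhd_loglog_bounds: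
  fixes a :: "nat \<Rightarrow> real" and s D t :: real
  assumes s: "1 < s" and D: "0 < D" and a_nonneg: "\<And>k. 0 \<le> a k"
    and rest_lower: "\<And>m. ln (real m + 2) powr (1 - s) / D \<le> cantor_rest a m"
    and rest_upper: "\<And>m. 1 \<le> m \<Longrightarrow> cantor_rest a m \<le> ln (real m + 1) powr (1 - s) / D"
    and t: "0 < t" and X: "3 \<le> ln (1 / t)" "4 * s\<^sup>2 \<le> ln (1 / t)" "2 * (\<bar>ln D\<bar> + s) \<le> ln (1 / t)"
  shows "2 powr (1 - s) / D * ln (ln (1 / t)) powr (1 - s) \<le> measure lebesgue (cantor_nbhd a t)"
    and "measure lebesgue (cantor_nbhd a t) \<le> 2 * 2 powr (s - 1) / D * ln (ln (1 / t)) powr (1 - s)"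
proof -
  define l where "l = ln (ln (1 / t))"
  have l: "0 < l"
    using X(1) by (simp add: l_def)
  have rest_nonneg: "0 \<le> cantor_rest a n" for n
    using order_trans[OF divide_nonneg_pos[OF powr_ge_zero D] rest_lower[of n]] .
  have "ln 2 \<le> ln (1 / t)"
    using X(1) ln_le_minus_one[of 2] by linarith
  then have "t \<le> 1 / 2"
    using t by (simp add: field_simps)
  then obtain m where m: "2 ^ Suc m * t \<le> cantor_rest a m"
    "cantor_rest a (Suc m) < 2 ^ Suc (Suc m) * t"
    "cantor_rest a (Suc m) \<le> measure lebesgue (cantor_nbhd a t)"
    "measure lebesgue (cantor_nbhd a t) \<le> 2 * cantor_rest a m"
    using cantor_nbhd_measure_bracket[OF a_nonneg rest_nonneg t] by blast
  have "2 ^ Suc m * t \<le> 1"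
    using m(1) cantor_rest_le_one[of a m, OF a_nonneg] by linarith
  then have ln_index_le: "ln (real (Suc m) + 2) \<le> 2 * l"
    unfolding l_def by (rule ln_add_two_le_of_pow2_mult_le_one[OF t _ X(1)])
  have "ln (real (Suc m) + 2) powr (1 - s) \<le> cantor_rest a (Suc m) * D"
    using rest_lower[of "Suc m"] D by (simp add: pos_divide_le_eq)
  also have "\<dots> < 2 ^ Suc (Suc m) * t * D"
    using m(2) D by (rule mult_strict_right_mono)
  finally have sqrt_less: "sqrt (ln (1 / t)) < real (Suc m)"
    by (rule sqrt_ln_inverse_less_of_ln_powr_less[OF s D t _ X(2,3)])
  moreover have "1 \<le> sqrt (ln (1 / t))"
    using X(1) by simp
  ultimately have "0 < real m"
    by linarith
  then have "1 \<le> m"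
    by simp
  have "l / 2 < ln (real (Suc m))"
    using ln_less_cancel_iff[THEN iffD2, OF _ _ sqrt_less] X(1) by (simp add: l_def ln_sqrt)
  have "2 powr (1 - s) / D * l powr (1 - s) = (2 * l) powr (1 - s) / D"
    using l by (simp add: powr_mult)
  also have "\<dots> \<le> ln (real (Suc m) + 2) powr (1 - s) / D"
    using ln_index_le s D by (intro divide_right_mono powr_mono2') auto
  also have "\<dots> \<le> measure lebesgue (cantor_nbhd a t)"
    using rest_lower[of "Suc m"] m(3) by linarith
  finally show "2 powr (1 - s) / D * l powr (1 - s) \<le> measure lebesgue (cantor_nbhd a t)" .
  have "measure lebesgue (cantor_nbhd a t) \<le> 2 * (ln (real (Suc m)) powr (1 - s) / D)"
    using m(4) rest_upper[OF \<open>1 \<le> m\<close>] by (simp add: add.commute)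
  also have "\<dots> \<le> 2 * ((l / 2) powr (1 - s) / D)"
    using \<open>l / 2 < ln (real (Suc m))\<close> l s D by (intro mult_left_mono divide_right_mono powr_mono2') auto
  also have "\<dots> = 2 * 2 powr (s - 1) / D * l powr (1 - s)"
    using l by (simp add: powr_divide powr_diff mult.commute)
  finally show "measure lebesgue (cantor_nbhd a t) \<le> 2 * 2 powr (s - 1) / D * l powr (1 - s)" .
qed

lemma cantor_nbhd_measure_loglog_asymptotics:
  fixes a :: "nat \<Rightarrow> real" and s D :: real
  assumes "1 < s" and D: "0 < D" and "\<And>k. 0 \<le> a k"
    and "\<And>m. ln (real m + 2) powr (1 - s) / D \<le> cantor_rest a m"
    and "\<And>m. 1 \<le> m \<Longrightarrow> cantor_rest a m \<le> ln (real m + 1) powr (1 - s) / D"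
  shows "\<exists>c1 c2 b t0. c1 > 0 \<and> c2 > 0 \<and> b > 0 \<and> t0 > 0 \<and>
           (\<forall>t. 0 < t \<and> t \<le> t0 \<longrightarrow> ln (ln (b / t)) > 0) \<and>
           (\<forall>t. 0 < t \<and> t \<le> t0 \<longrightarrow>
              c1 * (ln (ln (b / t))) powr (1 - s) \<le> measure lebesgue (cantor_nbhd a t) \<and>
              measure lebesgue (cantor_nbhd a t) \<le> c2 * (ln (ln (b / t))) powr (1 - s))"
proof (intro exI conjI allI impI)
  define X0 where "X0 = max 3 (max (4 * s\<^sup>2) (2 * (\<bar>ln D\<bar> + s)))"
  have X: "3 \<le> ln (1 / t)" "4 * s\<^sup>2 \<le> ln (1 / t)" "2 * (\<bar>ln D\<bar> + s) \<le> ln (1 / t)"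
    if t: "0 < t \<and> t \<le> exp (- X0)" for t
  proof -
    have "ln t \<le> - X0"
      using t by (metis ln_exp ln_le_cancel_iff exp_gt_zero)
    then have "X0 \<le> ln (1 / t)"
      using t by (simp add: ln_div)
    then show "3 \<le> ln (1 / t)" "4 * s\<^sup>2 \<le> ln (1 / t)" "2 * (\<bar>ln D\<bar> + s) \<le> ln (1 / t)"
      unfolding X0_def by simp_all
  qed
  fix t assume t: "0 < t \<and> t \<le> exp (- X0)"
  show "0 < ln (ln (1 / t))"
    using X(1)[OF t] by simp
  show "2 powr (1 - s) / D * ln (ln (1 / t)) powr (1 - s) \<le> measure lebesgue (cantor_nbhd a t)"
    "measure lebesgue (cantor_nbhd a t) \<le> 2 * 2 powr (s - 1) / D * ln (ln (1 / t)) powr (1 - s)"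
    using measure_cantor_nbhd_loglog_bounds[OF assms] t X[OF t] by auto
qed (use D in auto)

theorem lemma4p5:
  fixes s :: real
  assumes "s > 1"
  defines "\<eta> \<equiv> (\<Sum>k. 1 / ((real (Suc k) + 1) * (ln (real (Suc k) + 1)) powr s))"
  defines "a \<equiv> (\<lambda>k::nat. (1 / \<eta>) * (1 / ((real k + 1) * (ln (real k + 1)) powr s)))"
  shows "\<exists>c1 c2 b t0. c1 > 0 \<and> c2 > 0 \<and> b > 0 \<and> t0 > 0 \<and>
           (\<forall>t. 0 < t \<and> t \<le> t0 \<longrightarrow> ln (ln (b / t)) > 0) \<and>
           (\<forall>t. 0 < t \<and> t \<le> t0 \<longrightarrow>
              c1 * (ln (ln (b / t))) powr (1 - s) \<le> measure lebesgue (cantor_nbhd a t) \<and>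
              measure lebesgue (cantor_nbhd a t) \<le> c2 * (ln (ln (b / t))) powr (1 - s))"
proof -
  note bounds = cantor_rest_log_power_bounds[OF assms(1), folded \<eta>_def a_def]
  show ?thesis
  proof (rule cantor_nbhd_measure_loglog_asymptotics)
    show "0 < (s - 1) * \<eta>"
      using assms(1) bounds(1) by simp
    show "0 \<le> a k" for k
      using bounds(2) unfolding a_def .
  qed (use assms(1) bounds(3,4) in auto)
qed

end
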